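(* Consider the context-free grammar with nonterminals $S,R$, terminals $\bullet,(,)$, start symbol $S$ and rules $$S\to \bullet \mid S\bullet \mid (R) \mid S(R),\qquad R\to (\bullet) \mid (R) \mid (S(R)) \mid (S\bullet).$$ Then the grammar is non-ambiguous, the language generated from $S$ is exactly the set of nonempty canonical secondary structures (in dot-bracket notation), and the language generated from $R$ is exactly the set of nonempty secondary structures $T$ such that $(T)$ is canonical.
   Context: A secondary structure on $[1,n]$ (with $\theta=1$) is a set of pairs $(i,j)$, $1\le i<j\le n$, with no crossing pairs ($i<k<j<\ell$), each position in at most one pair, and $j-i>1$ for each pair; it is written as a dot-bracket word over $\{\bullet,(,)\}$. It is canonical if there is no pair $(i,j)$ with both $(i-1,j+1)$ and $(i+1,j-1)$ absent. A grammar is non-ambiguous if no word has two distinct leftmost derivations. *)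

theory Defs
  imports Main
begin

datatype sym = Dot | Op | Cl

text \<open>Secondary structure on [1,n] with theta = 1: set of pairs (i,j), 1 <= i < j <= n,
  j - i > 1, non-crossing, each position in at most one pair.\<close>
definition sec_struct :: "nat \<Rightarrow> (nat \<times> nat) set \<Rightarrow> bool" where
  "sec_struct n P \<longleftrightarrow>
     (\<forall>(i,j)\<in>P. 1 \<le> i \<and> i < j \<and> j \<le> n \<and> j - i > 1) \<and>
     (\<forall>(i,j)\<in>P. \<forall>(k,l)\<in>P. \<not> (i < k \<and> k < j \<and> j < l)) \<and>
     (\<forall>(i,j)\<in>P. \<forall>(k,l)\<in>P. (i,j) \<noteq> (k,l) \<longrightarrow> {i,j} \<inter> {k,l} = {})"

definition dotbracket :: "nat \<Rightarrow> (nat \<times> nat) set \<Rightarrow> sym list" where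
  "dotbracket n P = map (\<lambda>k. if \<exists>j. (k,j) \<in> P then Op
                              else if \<exists>i. (i,k) \<in> P then Cl else Dot) [1..<n+1]"

definition canonical :: "(nat \<times> nat) set \<Rightarrow> bool" where
  "canonical P \<longleftrightarrow> \<not> (\<exists>(i,j)\<in>P. (i-1, j+1) \<notin> P \<and> (i+1, j-1) \<notin> P)"

definition is_ss :: "sym list \<Rightarrow> bool" where
  "is_ss w \<longleftrightarrow> (\<exists>P. sec_struct (length w) P \<and> dotbracket (length w) P = w)"

definition is_canonical_ss :: "sym list \<Rightarrow> bool" where
  "is_canonical_ss w \<longleftrightarrow>
     (\<exists>P. sec_struct (length w) P \<and> dotbracket (length w) P = w \<and> canonical P)"

datatype nt = S | R

datatype gsym = Tm sym | Nt nt

definition rules :: "(nt \<times> gsym list) set" where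
  "rules = {
     (S, [Tm Dot]),
     (S, [Nt S, Tm Dot]),
     (S, [Tm Op, Nt R, Tm Cl]),
     (S, [Nt S, Tm Op, Nt R, Tm Cl]),
     (R, [Tm Op, Tm Dot, Tm Cl]),
     (R, [Tm Op, Nt R, Tm Cl]),
     (R, [Tm Op, Nt S, Tm Op, Nt R, Tm Cl, Tm Cl]),
     (R, [Tm Op, Nt S, Tm Dot, Tm Cl])}"

definition step :: "gsym list \<Rightarrow> gsym list \<Rightarrow> bool" where
  "step \<alpha> \<beta> \<longleftrightarrow> (\<exists>u v A rhs. (A, rhs) \<in> rules \<and> \<alpha> = u @ Nt A # v \<and> \<beta> = u @ rhs @ v)"

definition lang :: "nt \<Rightarrow> sym list set" where
  "lang A = {w. step\<^sup>*\<^sup>* [Nt A] (map Tm w)}"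

definition lm_step :: "nt \<times> gsym list \<Rightarrow> gsym list \<Rightarrow> gsym list \<Rightarrow> bool" where
  "lm_step r \<alpha> \<beta> \<longleftrightarrow> r \<in> rules \<and>
     (\<exists>u v. \<alpha> = map Tm u @ Nt (fst r) # v \<and> \<beta> = map Tm u @ snd r @ v)"

text \<open>A leftmost derivation from \<alpha> to \<gamma>, recorded as the sequence of rules applied
  (which determines the sequence of sentential forms).\<close>
inductive lm_deriv :: "gsym list \<Rightarrow> (nt \<times> gsym list) list \<Rightarrow> gsym list \<Rightarrow> bool" where
  lm_nil: "lm_deriv \<alpha> [] \<alpha>"
| lm_cons: "lm_step r \<alpha> \<beta> \<Longrightarrow> lm_deriv \<beta> rs \<gamma> \<Longrightarrow> lm_deriv \<alpha> (r # rs) \<gamma>"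

definition non_ambiguous :: "nt \<Rightarrow> bool" where
  "non_ambiguous A \<longleftrightarrow>
     (\<forall>w rs1 rs2. lm_deriv [Nt A] rs1 (map Tm w) \<longrightarrow> lm_deriv [Nt A] rs2 (map Tm w) \<longrightarrow> rs1 = rs2)"

end

theory Submission
  imports Defs
begin

(*
  Derived words are nonempty and balanced, and R-words are arcs around
  balanced words.  Consequently the first production of a derivation is a function of the
  derived word (rule_for_correct), and the factorization of the word along that production is
  unique (parse_unique), since a balanced word followed by an arc splits in only one way.
  A leftmost derivation of a sentential form decomposes into leftmost derivations of its
  symbols (lm_deriv_pieces), and an induction on the length of the word shows that leftmost
  derivations are unique (lm_deriv_unique).

  Secondary structures are encoded by plane forests.  S-words are the words of
  nonempty canonical forests and R-words are arcs around canonical forests whose lone tree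
  may stack on that arc (generated_S_iff, generated_R_iff).  Forests and secondary structures
  correspond in both directions, preserving the dot-bracket word and canonicity: a forest
  yields its set of arcs (forest_sec_struct, forest_canonical), and a secondary structure is
  cut into a forest at the partner of its first position (structure_forest).
*)

section \<open>The grammar as an inductive predicate\<close>

inductive generated :: "nt \<Rightarrow> sym list \<Rightarrow> bool" where
  S_dot:      "generated S [Dot]"
| S_app_dot:  "generated S u \<Longrightarrow> generated S (u @ [Dot])"
| S_arc:      "generated R v \<Longrightarrow> generated S (Op # v @ [Cl])"
| S_app_arc:  "generated S u \<Longrightarrow> generated R v \<Longrightarrow> generated S (u @ Op # v @ [Cl])"
| R_dot:      "generated R [Op, Dot, Cl]"
| R_stack:    "generated R v \<Longrightarrow> generated R (Op # v @ [Cl])"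
| R_app_arc:  "generated S u \<Longrightarrow> generated R v \<Longrightarrow> generated R (Op # u @ Op # v @ [Cl, Cl])"
| R_app_dot:  "generated S u \<Longrightarrow> generated R (Op # u @ [Dot, Cl])"

fun sym_gen :: "gsym \<Rightarrow> sym list \<Rightarrow> bool" where
  "sym_gen (Tm a) v \<longleftrightarrow> v = [a]"
| "sym_gen (Nt A) v \<longleftrightarrow> generated A v"

definition form_gen :: "gsym list \<Rightarrow> sym list \<Rightarrow> bool" where
  "form_gen \<alpha> w \<longleftrightarrow> (\<exists>ws. list_all2 sym_gen \<alpha> ws \<and> w = concat ws)"

lemma form_gen_Nil [simp]: "form_gen [] w \<longleftrightarrow> w = []"
  by (simp add: form_gen_def)

lemma form_gen_Cons [simp]:
  "form_gen (X # \<alpha>) w \<longleftrightarrow> (\<exists>u v. w = u @ v \<and> sym_gen X u \<and> form_gen \<alpha> v)"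
  unfolding form_gen_def list_all2_Cons1 by (metis concat.simps(2))

lemma form_gen_append:
  "form_gen (\<alpha> @ \<beta>) w \<longleftrightarrow> (\<exists>u v. w = u @ v \<and> form_gen \<alpha> u \<and> form_gen \<beta> v)"
proof (induction \<alpha> arbitrary: w)
  case (Cons X \<alpha>)
  then show ?case by simp (metis append.assoc)
qed simp

lemma form_gen_map_Tm: "form_gen (map Tm u) w \<longleftrightarrow> w = u"
  by (induction u arbitrary: w) auto

lemma rule_generated: "(A, rhs) \<in> rules \<Longrightarrow> form_gen rhs w \<Longrightarrow> generated A w"
  by (auto simp: rules_def intro: generated.intros)

lemma form_gen_step:
  assumes "step \<alpha> \<beta>" "form_gen \<beta> w" shows "form_gen \<alpha> w"
proof -
  from assms(1) obtain u v A rhs where r: "(A, rhs) \<in> rules" and "\<alpha> = u @ Nt A # v" "\<beta> = u @ rhs @ v"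
    unfolding step_def by blast
  moreover from assms(2) this obtain w1 w2 w3 where
    "w = w1 @ w2 @ w3" "form_gen u w1" "form_gen rhs w2" "form_gen v w3"
    by (auto simp: form_gen_append)
  ultimately show ?thesis
    using rule_generated[OF r] by (auto simp: form_gen_append) blast
qed

lemma form_gen_steps: "step\<^sup>*\<^sup>* \<alpha> \<beta> \<Longrightarrow> form_gen \<beta> w \<Longrightarrow> form_gen \<alpha> w"
  by (induction rule: rtranclp_induct) (auto intro: form_gen_step)

lemma steps_generated: "step\<^sup>*\<^sup>* [Nt A] (map Tm w) \<Longrightarrow> generated A w"
  using form_gen_steps[of "[Nt A]" "map Tm w" w] by (simp add: form_gen_map_Tm)

lemma step_in_context: "step \<alpha> \<beta> \<Longrightarrow> step (x @ \<alpha> @ y) (x @ \<beta> @ y)"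
  unfolding step_def by (metis append.assoc append_Cons)

lemma steps_in_context: "step\<^sup>*\<^sup>* \<alpha> \<beta> \<Longrightarrow> step\<^sup>*\<^sup>* (x @ \<alpha> @ y) (x @ \<beta> @ y)"
  by (induction rule: rtranclp_induct) (auto intro: step_in_context rtranclp.rtrancl_into_rtrancl)

lemma form_steps:
  "list_all2 (\<lambda>X v. step\<^sup>*\<^sup>* [X] (map Tm v)) \<alpha> ws \<Longrightarrow> step\<^sup>*\<^sup>* \<alpha> (map Tm (concat ws))"
proof (induction \<alpha> arbitrary: ws)
  case (Cons X \<alpha>)
  then obtain v vs where ws: "ws = v # vs" and X: "step\<^sup>*\<^sup>* [X] (map Tm v)"
    and rest: "step\<^sup>*\<^sup>* \<alpha> (map Tm (concat vs))"
    by (auto simp: list_all2_Cons1)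
  have "step\<^sup>*\<^sup>* ([] @ [X] @ \<alpha>) ([] @ map Tm v @ \<alpha>)"
    using steps_in_context[OF X] .
  moreover have "step\<^sup>*\<^sup>* (map Tm v @ \<alpha> @ []) (map Tm v @ map Tm (concat vs) @ [])"
    using steps_in_context[OF rest] .
  ultimately show ?case using ws by simp
qed simp

lemma rule_step: "(A, rhs) \<in> rules \<Longrightarrow> step [Nt A] rhs"
  unfolding step_def by (metis append.right_neutral append_Nil)

lemma rule_steps:
  "(A, rhs) \<in> rules \<Longrightarrow> list_all2 (\<lambda>X v. step\<^sup>*\<^sup>* [X] (map Tm v)) rhs ws
   \<Longrightarrow> step\<^sup>*\<^sup>* [Nt A] (map Tm (concat ws))"
  by (metis converse_rtranclp_into_rtranclp form_steps rule_step)

lemma generated_steps: "generated A w \<Longrightarrow> step\<^sup>*\<^sup>* [Nt A] (map Tm w)"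
proof (induction rule: generated.induct)
  case S_dot show ?case using rule_steps[of S "[Tm Dot]" "[[Dot]]"] by (simp add: rules_def)
next
  case (S_app_dot u) then show ?case
    using rule_steps[of S "[Nt S, Tm Dot]" "[u, [Dot]]"] by (simp add: rules_def)
next
  case (S_arc v) then show ?case
    using rule_steps[of S "[Tm Op, Nt R, Tm Cl]" "[[Op], v, [Cl]]"] by (simp add: rules_def)
next
  case (S_app_arc u v) then show ?case
    using rule_steps[of S "[Nt S, Tm Op, Nt R, Tm Cl]" "[u, [Op], v, [Cl]]"] by (simp add: rules_def)
next
  case R_dot show ?case
    using rule_steps[of R "[Tm Op, Tm Dot, Tm Cl]" "[[Op], [Dot], [Cl]]"] by (simp add: rules_def)
next
  case (R_stack v) then show ?case
    using rule_steps[of R "[Tm Op, Nt R, Tm Cl]" "[[Op], v, [Cl]]"] by (simp add: rules_def)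
next
  case (R_app_arc u v) then show ?case
    using rule_steps[of R "[Tm Op, Nt S, Tm Op, Nt R, Tm Cl, Tm Cl]" "[[Op], u, [Op], v, [Cl], [Cl]]"]
    by (simp add: rules_def)
next
  case (R_app_dot u) then show ?case
    using rule_steps[of R "[Tm Op, Nt S, Tm Dot, Tm Cl]" "[[Op], u, [Dot], [Cl]]"] by (simp add: rules_def)
qed

lemma lang_generated: "lang A = {w. generated A w}"
  unfolding lang_def using steps_generated generated_steps by blast

section \<open>Balanced words\<close>

fun height :: "sym list \<Rightarrow> int" where
  "height [] = 0"
| "height (Op # w) = height w + 1"
| "height (Cl # w) = height w - 1"
| "height (Dot # w) = height w"

lemma height_append [simp]: "height (u @ v) = height u + height v"
  by (induction u rule: height.induct) auto

definition balanced :: "sym list \<Rightarrow> bool" where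
  "balanced w \<longleftrightarrow> height w = 0 \<and> (\<forall>u v. w = u @ v \<longrightarrow> 0 \<le> height u)"

lemma balanced_Nil: "balanced []"
  by (simp add: balanced_def)

lemma balanced_Dot: "balanced [Dot]"
  by (auto simp: balanced_def Cons_eq_append_conv)

lemma balanced_append: "balanced u \<Longrightarrow> balanced v \<Longrightarrow> balanced (u @ v)"
  unfolding balanced_def by (fastforce simp: append_eq_append_conv2)

lemma balanced_arc: "balanced u \<Longrightarrow> balanced (Op # u @ [Cl])"
  unfolding balanced_def
  by (fastforce simp: Cons_eq_append_conv append_eq_append_conv2 append_eq_Cons_conv)

lemma generated_balanced: "generated A w \<Longrightarrow> w \<noteq> [] \<and> balanced w"
proof (induction rule: generated.induct)
  case R_dot
  show ?case using balanced_arc[OF balanced_Dot] by simp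
next
  case (S_app_arc u v)
  then show ?case using balanced_append[OF _ balanced_arc] by simp
next
  case (R_app_arc u v)
  then show ?case
    using balanced_arc[OF balanced_append[OF _ balanced_arc], of u v] by simp
next
  case (R_app_dot u)
  then show ?case using balanced_arc[OF balanced_append[OF _ balanced_Dot], of u] by simp
qed (use balanced_Dot balanced_arc balanced_append in \<open>auto simp del: append_Cons\<close>)

lemma generated_R_arc:
  assumes "generated R v" shows "\<exists>y. v = Op # y @ [Cl] \<and> balanced y"
  using assms
proof cases
  case R_dot
  then show ?thesis using balanced_Dot by auto
next
  case (R_stack v')
  then show ?thesis using generated_balanced by auto
next
  case (R_app_arc u v')
  then show ?thesis using generated_balanced balanced_append balanced_arc by fastforce
next
  case (R_app_dot u)
  then show ?thesis using generated_balanced balanced_append balanced_Dot by fastforce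
qed

(* A balanced word followed by an arc around a balanced word splits in only one way:
   a longer first part would be a balanced word with an unmatched opening bracket. *)
lemma balanced_split_unique:
  assumes "balanced x" "balanced y" "balanced x'" "balanced y'"
    and eq: "x @ Op # y @ [Cl] = x' @ Op # y' @ [Cl]"
  shows "x = x' \<and> y = y'"
proof -
  have prefix: "x1 = x2" if "balanced x1" "balanced y1" "balanced x2" "length x1 \<le> length x2"
    "x1 @ Op # y1 @ [Cl] = x2 @ Op # y2 @ [Cl]" for x1 y1 x2 y2
  proof (rule ccontr)
    assume "x1 \<noteq> x2"
    with that(4,5) obtain z where x2: "x2 = x1 @ Op # z" and "y1 @ [Cl] = z @ Op # y2 @ [Cl]"
      by (auto simp: append_eq_append_conv2 Cons_eq_append_conv)
    then obtain z' where "y1 = z @ z'"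
      by (auto simp: append_eq_append_conv2 append_eq_Cons_conv)
    with that(2) have "0 \<le> height z" by (auto simp: balanced_def)
    with that(1,3) x2 show False by (simp add: balanced_def)
  qed
  have "x = x'"
    using prefix[of x y x' y'] prefix[of x' y' x y] assms by (cases "length x \<le> length x'") auto
  with eq show ?thesis by simp
qed

section \<open>The word determines the first rule and its factorization\<close>

definition is_arc :: "sym list \<Rightarrow> bool" where
  "is_arc w \<longleftrightarrow> (\<exists>y. w = Op # y @ [Cl] \<and> balanced y)"

lemma not_is_arc:
  assumes "balanced u" "balanced v" "u \<noteq> []" shows "\<not> is_arc (u @ Op # v @ [Cl])"
  using balanced_split_unique[of "[]" _ u v] assms balanced_Nil unfolding is_arc_def by auto

lemma rules_cases [consumes 1, case_names S_dot S_app_dot S_arc S_app_arc R_dot R_stack R_app_arc R_app_dot]: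
  assumes "(A, rhs) \<in> rules"
  obtains "A = S" "rhs = [Tm Dot]"
    | "A = S" "rhs = [Nt S, Tm Dot]"
    | "A = S" "rhs = [Tm Op, Nt R, Tm Cl]"
    | "A = S" "rhs = [Nt S, Tm Op, Nt R, Tm Cl]"
    | "A = R" "rhs = [Tm Op, Tm Dot, Tm Cl]"
    | "A = R" "rhs = [Tm Op, Nt R, Tm Cl]"
    | "A = R" "rhs = [Tm Op, Nt S, Tm Op, Nt R, Tm Cl, Tm Cl]"
    | "A = R" "rhs = [Tm Op, Nt S, Tm Dot, Tm Cl]"
  using assms unfolding rules_def by blast

(* The production that must be applied first to derive w from A, read off from w:
   the last symbol, and whether the (inner) word is a single dot or a single arc. *)
definition rule_for :: "nt \<Rightarrow> sym list \<Rightarrow> gsym list" where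
  "rule_for A w =
    (if A = S then
       if last w = Dot then if w = [Dot] then [Tm Dot] else [Nt S, Tm Dot]
       else if is_arc w then [Tm Op, Nt R, Tm Cl] else [Nt S, Tm Op, Nt R, Tm Cl]
     else let x = butlast (tl w) in
       if last x = Dot then if x = [Dot] then [Tm Op, Tm Dot, Tm Cl] else [Tm Op, Nt S, Tm Dot, Tm Cl]
       else if is_arc x then [Tm Op, Nt R, Tm Cl] else [Tm Op, Nt S, Tm Op, Nt R, Tm Cl, Tm Cl])"

lemma rule_for_correct:
  assumes "(A, rhs) \<in> rules" "form_gen rhs w" shows "rhs = rule_for A w"
proof -
  have S_ne: "u \<noteq> []" and S_bal: "balanced u" if "generated S u" for u
    using generated_balanced[OF that] by auto
  have R_arc: "is_arc v" and R_bal: "balanced v" if "generated R v" for v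
    using generated_R_arc[OF that] generated_balanced[OF that] by (auto simp: is_arc_def)
  have arc: "is_arc (Op # v @ [Cl])" if "balanced v" for v
    using that by (auto simp: is_arc_def)
  from assms(1) show ?thesis
  proof (cases rule: rules_cases)
    case S_app_dot
    with assms(2) show ?thesis by (auto simp: rule_for_def butlast_append dest: S_ne)
  next
    case S_arc
    with assms(2) show ?thesis by (auto simp: rule_for_def intro: arc R_bal)
  next
    case S_app_arc
    with assms(2) show ?thesis
      by (auto simp: rule_for_def not_is_arc S_ne S_bal R_bal butlast_append)
  next
    case R_stack
    with assms(2) obtain v where "w = Op # v @ [Cl]" "generated R v" by auto
    moreover from \<open>generated R v\<close> obtain y where "v = Op # y @ [Cl]" "balanced y"
      using generated_R_arc by blast
    ultimately have "butlast (tl w) = v" "last v = Cl" "v \<noteq> [Dot]" "is_arc v"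
      by (auto simp: arc butlast_append)
    then show ?thesis using R_stack by (simp add: rule_for_def)
  next
    case R_app_arc
    with assms(2) show ?thesis
      by (auto simp: rule_for_def not_is_arc S_ne S_bal R_bal butlast_append)
  next
    case R_app_dot
    with assms(2) show ?thesis by (auto simp: rule_for_def butlast_append dest: S_ne)
  qed (use assms(2) in \<open>auto simp: rule_for_def\<close>)
qed

lemma parse_unique:
  assumes "(A, rhs) \<in> rules" "list_all2 sym_gen rhs ws1" "list_all2 sym_gen rhs ws2"
    and "concat ws1 = concat ws2"
  shows "ws1 = ws2"
proof -
  have split: "u1 = u2 \<and> v1 = v2" if "u1 @ Op # v1 = u2 @ Op # v2"
    "generated S u1" "generated S u2" "generated R v1" "generated R v2" for u1 u2 v1 v2
  proof -
    from that(1) have "u1 @ Op # v1 @ [Cl] = u2 @ Op # v2 @ [Cl]" by simp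
    then show ?thesis using balanced_split_unique that(2-) generated_balanced by blast
  qed
  from assms(1) show ?thesis
  proof (cases rule: rules_cases)
    case S_app_arc
    with assms(2-4) show ?thesis by (auto simp: list_all2_Cons1 dest: split)
  next
    case R_app_arc
    with assms(2-4) show ?thesis
      by (auto simp: list_all2_Cons1 dest: split)
  qed (use assms(2-4) in \<open>auto simp: list_all2_Cons1\<close>)
qed

section \<open>Decomposing leftmost derivations\<close>

lemma map_Tm_eq_iff [simp]: "map Tm u = map Tm v \<longleftrightarrow> u = v"
  by (simp add: inj_map_eq_map inj_def)

lemma lm_deriv_steps: "lm_deriv \<alpha> rs \<beta> \<Longrightarrow> step\<^sup>*\<^sup>* \<alpha> \<beta>"
proof (induction rule: lm_deriv.induct)
  case (lm_cons r \<alpha> \<beta> rs \<gamma>)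
  have "step \<alpha> \<beta>"
    using lm_cons.hyps(1) unfolding lm_step_def step_def by (cases r) auto
  then show ?case using lm_cons.IH by (rule converse_rtranclp_into_rtranclp)
qed simp

lemma lm_deriv_generated: "lm_deriv [Nt A] rs (map Tm w) \<Longrightarrow> generated A w"
  using lm_deriv_steps steps_generated by blast

lemma lm_deriv_terminal: "lm_deriv (map Tm u) rs \<gamma> \<Longrightarrow> rs = [] \<and> \<gamma> = map Tm u"
  by (cases rule: lm_deriv.cases) (auto simp: lm_step_def map_eq_append_conv map_eq_Cons_conv)

lemma leftmost_split:
  assumes "map Tm u @ Nt A # v = \<alpha> @ \<beta>"
  shows "(\<exists>\<alpha>'. \<alpha> = map Tm u @ Nt A # \<alpha>' \<and> v = \<alpha>' @ \<beta>)
       \<or> (\<exists>u1 u2. \<alpha> = map Tm u1 \<and> u = u1 @ u2 \<and> \<beta> = map Tm u2 @ Nt A # v)"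
proof -
  from assms obtain us where
    "(map Tm u = \<alpha> @ us \<and> us @ Nt A # v = \<beta>) \<or> (map Tm u @ us = \<alpha> \<and> Nt A # v = us @ \<beta>)"
    by (auto simp: append_eq_append_conv2)
  then show ?thesis
  proof (elim disjE conjE)
    assume "map Tm u = \<alpha> @ us" "us @ Nt A # v = \<beta>"
    then show ?thesis by (auto simp: map_eq_append_conv)
  next
    assume "map Tm u @ us = \<alpha>" "Nt A # v = us @ \<beta>"
    then show ?thesis by (cases us) auto
  qed
qed

lemma lm_deriv_split:
  assumes "lm_deriv (\<alpha> @ \<beta>) rs (map Tm w)"
  shows "\<exists>rs1 rs2 w1 w2. rs = rs1 @ rs2 \<and> w = w1 @ w2
           \<and> lm_deriv \<alpha> rs1 (map Tm w1) \<and> lm_deriv \<beta> rs2 (map Tm w2)"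
  using assms
proof (induction "\<alpha> @ \<beta>" rs "map Tm w" arbitrary: \<alpha> \<beta> rule: lm_deriv.induct)
  case lm_nil
  then obtain w1 w2 where "\<alpha> = map Tm w1" "\<beta> = map Tm w2" "w = w1 @ w2"
    by (auto simp: append_eq_map_conv)
  then show ?case by (blast intro: lm_deriv.lm_nil)
next
  case (lm_cons r \<beta>' rs)
  then obtain u v where r: "r \<in> rules" and lhs: "map Tm u @ Nt (fst r) # v = \<alpha> @ \<beta>"
    and rhs: "\<beta>' = map Tm u @ snd r @ v"
    unfolding lm_step_def by auto
  from leftmost_split[OF lhs] show ?case
  proof (elim disjE exE conjE)
    fix \<alpha>' assume \<alpha>: "\<alpha> = map Tm u @ Nt (fst r) # \<alpha>'" and "v = \<alpha>' @ \<beta>"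
    then have "\<beta>' = (map Tm u @ snd r @ \<alpha>') @ \<beta>" using rhs by simp
    from lm_cons.hyps(3)[OF this] obtain rs1 rs2 w1 w2 where
      "rs = rs1 @ rs2" "w = w1 @ w2" "lm_deriv (map Tm u @ snd r @ \<alpha>') rs1 (map Tm w1)"
      "lm_deriv \<beta> rs2 (map Tm w2)" by blast
    moreover have "lm_step r \<alpha> (map Tm u @ snd r @ \<alpha>')"
      unfolding lm_step_def using r \<alpha> by blast
    ultimately show ?thesis by (metis append_Cons lm_deriv.lm_cons)
  next
    fix u1 u2 assume \<alpha>: "\<alpha> = map Tm u1" and "u = u1 @ u2" and \<beta>: "\<beta> = map Tm u2 @ Nt (fst r) # v"
    then have "\<beta>' = \<alpha> @ (map Tm u2 @ snd r @ v)" using rhs by simp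
    from lm_cons.hyps(3)[OF this] obtain rs1 rs2 w1 w2 where
      "rs = rs1 @ rs2" "w = w1 @ w2" "lm_deriv \<alpha> rs1 (map Tm w1)"
      "lm_deriv (map Tm u2 @ snd r @ v) rs2 (map Tm w2)" by blast
    moreover have "lm_step r \<beta> (map Tm u2 @ snd r @ v)"
      unfolding lm_step_def using r \<beta> by blast
    ultimately show ?thesis
      using lm_deriv_terminal[of u1] \<alpha> by (metis append_Nil lm_deriv.lm_cons)
  qed
qed

lemma lm_deriv_pieces:
  "lm_deriv \<alpha> rs (map Tm w) \<Longrightarrow>
   \<exists>ps. list_all2 (\<lambda>X (r, v). lm_deriv [X] r (map Tm v)) \<alpha> ps
        \<and> rs = concat (map fst ps) \<and> w = concat (map snd ps)"
proof (induction \<alpha> arbitrary: rs w)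
  case Nil
  then have "rs = [] \<and> w = []" using lm_deriv_terminal[of "[]" rs "map Tm w"] by simp
  then show ?case by (intro exI[of _ "[]"]) simp
next
  case (Cons X \<alpha>)
  have "lm_deriv ([X] @ \<alpha>) rs (map Tm w)" using Cons.prems by simp
  from lm_deriv_split[OF this] obtain rs1 rs2 w1 w2 where split: "rs = rs1 @ rs2" "w = w1 @ w2"
    and X: "lm_deriv [X] rs1 (map Tm w1)" and rest: "lm_deriv \<alpha> rs2 (map Tm w2)"
    by blast
  from Cons.IH[OF rest] obtain ps where
    "list_all2 (\<lambda>X (r, v). lm_deriv [X] r (map Tm v)) \<alpha> ps"
    "rs2 = concat (map fst ps)" "w2 = concat (map snd ps)" by blast
  with split X show ?case by (intro exI[of _ "(rs1, w1) # ps"]) simp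
qed

lemma lm_deriv_symbol:
  "lm_deriv [X] r (map Tm v) \<Longrightarrow> sym_gen X v \<and> (\<forall>a. X = Tm a \<longrightarrow> r = [])"
proof (cases X)
  case (Tm a)
  moreover assume "lm_deriv [X] r (map Tm v)"
  ultimately have "lm_deriv (map Tm [a]) r (map Tm v)" by simp
  from lm_deriv_terminal[OF this] have "r = [] \<and> v = [a]" by (simp only: map_Tm_eq_iff)
  with Tm show ?thesis by simp
next
  case (Nt A)
  moreover assume "lm_deriv [X] r (map Tm v)"
  ultimately show ?thesis using lm_deriv_generated by simp
qed

lemma lm_deriv_first_rule:
  assumes "lm_deriv [Nt A] rs (map Tm w)"
  shows "\<exists>rhs rs'. rs = (A, rhs) # rs' \<and> (A, rhs) \<in> rules \<and> lm_deriv rhs rs' (map Tm w)"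
  using assms
proof cases
  case lm_nil
  then show ?thesis by (simp add: map_eq_Cons_conv)
next
  case (lm_cons r \<beta> rs')
  then obtain u v where "r \<in> rules" "[Nt A] = map Tm u @ Nt (fst r) # v" "\<beta> = map Tm u @ snd r @ v"
    unfolding lm_step_def by blast
  moreover from this(2) have "u = [] \<and> v = [] \<and> fst r = A"
    by (cases u) auto
  ultimately show ?thesis using lm_cons by (cases r) auto
qed

section \<open>Non-ambiguity\<close>

(* In a concatenation of at least two nonempty words, each word is strictly shorter than
   the whole; this makes the induction in lm_deriv_unique well founded. *)
lemma length_lt_concat:
  assumes "\<forall>u\<in>set ws. u \<noteq> []" "v \<in> set ws" "2 \<le> length ws"
  shows "length v < length (concat ws)"
proof -
  obtain xs ys where ws: "ws = xs @ v # ys" using split_list[OF assms(2)] by blast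
  with assms(3) have "xs @ ys \<noteq> []" by auto
  with assms(1) ws have "concat (xs @ ys) \<noteq> []" by auto
  with ws show ?thesis by simp
qed

lemma sym_gen_nonempty: "sym_gen X v \<Longrightarrow> v \<noteq> []"
  by (cases X) (auto dest: generated_balanced)

lemma parse_pieces_nonempty: "list_all2 sym_gen \<alpha> ws \<Longrightarrow> \<forall>v\<in>set ws. v \<noteq> []"
proof (induction \<alpha> arbitrary: ws)
  case (Cons X \<alpha>)
  then obtain v vs where "ws = v # vs" "sym_gen X v" "list_all2 sym_gen \<alpha> vs"
    by (auto simp: list_all2_Cons1)
  with Cons.IH[of vs] sym_gen_nonempty[of X v] show ?case by simp
qed simp

lemma list_all2_determined_by_snd:
  assumes "list_all2 Q \<alpha> ps1" "list_all2 Q \<alpha> ps2" "map snd ps1 = map snd ps2"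
    and "\<And>X r1 r2 v. X \<in> set \<alpha> \<Longrightarrow> v \<in> set (map snd ps1) \<Longrightarrow> Q X (r1, v) \<Longrightarrow> Q X (r2, v) \<Longrightarrow> r1 = r2"
  shows "ps1 = ps2"
  using assms
proof (induction \<alpha> arbitrary: ps1 ps2)
  case (Cons X \<alpha>)
  then obtain p1 q1 p2 q2 where "ps1 = p1 # q1" "ps2 = p2 # q2" "Q X p1" "Q X p2"
    "list_all2 Q \<alpha> q1" "list_all2 Q \<alpha> q2"
    by (auto simp: list_all2_Cons1)
  moreover have "q1 = q2"
  proof (rule Cons.IH)
    show "list_all2 Q \<alpha> q1" "list_all2 Q \<alpha> q2" "map snd q1 = map snd q2"
      using Cons.prems(3) calculation by auto
    show "r1 = r2" if "X' \<in> set \<alpha>" "v \<in> set (map snd q1)" "Q X' (r1, v)" "Q X' (r2, v)"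
      for X' v r1 r2
    proof (rule Cons.prems(4))
      show "X' \<in> set (X # \<alpha>)" "v \<in> set (map snd ps1)"
        using that(1,2) calculation(1) by simp_all
    qed (use that in simp_all)
  qed
  moreover have "fst p1 = fst p2"
  proof (rule Cons.prems(4))
    show "X \<in> set (X # \<alpha>)" "snd p1 \<in> set (map snd ps1)"
      using calculation by simp_all
    show "Q X (fst p1, snd p1)" "Q X (fst p2, snd p1)"
      using calculation Cons.prems(3) by (cases p1, cases p2, simp)+
  qed
  ultimately show ?case using Cons.prems(3) by (simp add: prod_eq_iff)
qed simp

lemma lm_deriv_parse:
  assumes "lm_deriv [Nt A] rs (map Tm w)"
  obtains rhs ps where "(A, rhs) \<in> rules" "rs = (A, rhs) # concat (map fst ps)"
    "w = concat (map snd ps)" "list_all2 (\<lambda>X (r, v). lm_deriv [X] r (map Tm v)) rhs ps"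
    "list_all2 sym_gen rhs (map snd ps)"
proof -
  from lm_deriv_first_rule[OF assms] obtain rhs rs' where
    "rs = (A, rhs) # rs'" "(A, rhs) \<in> rules" "lm_deriv rhs rs' (map Tm w)"
    by blast
  moreover from lm_deriv_pieces[OF this(3)] obtain ps where
    "list_all2 (\<lambda>X (r, v). lm_deriv [X] r (map Tm v)) rhs ps"
    "rs' = concat (map fst ps)" "w = concat (map snd ps)"
    by blast
  moreover from this(1) have "list_all2 sym_gen rhs (map snd ps)"
    using lm_deriv_symbol by (auto simp: list_all2_map2 elim!: list_all2_mono)
  ultimately show ?thesis using that by blast
qed

(* Non-ambiguity: by induction on the word, the first production and the pieces are
   determined by the word, and so, by induction, are the derivations of the pieces. *)
lemma lm_deriv_unique:
  "lm_deriv [Nt A] rs1 (map Tm w) \<Longrightarrow> lm_deriv [Nt A] rs2 (map Tm w) \<Longrightarrow> rs1 = rs2"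
proof (induction "length w" arbitrary: A w rs1 rs2 rule: less_induct)
  case less
  let ?piece = "\<lambda>X (r, v). lm_deriv [X] r (map Tm v)"
  obtain rhs1 ps1 where r1: "(A, rhs1) \<in> rules" and rs1: "rs1 = (A, rhs1) # concat (map fst ps1)"
    and w1: "w = concat (map snd ps1)" and p1: "list_all2 ?piece rhs1 ps1"
    and parse1: "list_all2 sym_gen rhs1 (map snd ps1)"
    using lm_deriv_parse[OF less.prems(1)] by blast
  obtain rhs2 ps2 where r2: "(A, rhs2) \<in> rules" and rs2: "rs2 = (A, rhs2) # concat (map fst ps2)"
    and w2: "w = concat (map snd ps2)" and p2: "list_all2 ?piece rhs2 ps2"
    and parse2: "list_all2 sym_gen rhs2 (map snd ps2)"
    using lm_deriv_parse[OF less.prems(2)] by blast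
  have same_rule: "rhs1 = rhs2"
    using rule_for_correct[OF r1] rule_for_correct[OF r2] parse1 parse2 w1 w2
    unfolding form_gen_def by metis
  have same_words: "map snd ps1 = map snd ps2"
    using parse_unique[OF r1 parse1] parse2 w1 w2 same_rule by simp
  have "ps1 = ps2"
  proof (rule list_all2_determined_by_snd[OF p1 _ same_words])
    show "list_all2 ?piece rhs1 ps2" using p2 same_rule by simp
  next
    fix X r r' v
    assume X: "X \<in> set rhs1" and v: "v \<in> set (map snd ps1)"
      and d: "?piece X (r, v)" "?piece X (r', v)"
    show "r = r'"
    proof (cases X)
      case (Tm a)
      with d have "lm_deriv [Tm a] r (map Tm v)" "lm_deriv [Tm a] r' (map Tm v)" by simp_all
      then show ?thesis using lm_deriv_symbol by blast
    next
      case (Nt B)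
      with X r1 have "2 \<le> length (map snd ps1)"
        using list_all2_lengthD[OF parse1] by (auto simp: rules_def)
      then have "length v < length w"
        using length_lt_concat[OF parse_pieces_nonempty[OF parse1] v] w1 by simp
      with d Nt show ?thesis using less.hyps by auto
    qed
  qed
  with rs1 rs2 same_rule show ?case by simp
qed

section \<open>Plane forests and the grammar\<close>

(* A secondary structure read as a plane forest: unpaired positions are leaves and each
   pair is an arc whose children form its interior. *)
datatype tree = Unpaired | Arc "tree list"

fun word_tree :: "tree \<Rightarrow> sym list" and word :: "tree list \<Rightarrow> sym list" where
  "word_tree Unpaired = [Dot]"
| "word_tree (Arc f) = Op # word f @ [Cl]"
| "word [] = []"
| "word (t # f) = word_tree t @ word f"

lemma word_append [simp]: "word (f @ g) = word f @ word g"
  by (induction f) auto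

lemma word_tree_nonempty [simp]: "word_tree t \<noteq> []"
  by (cases t) auto

lemma word_eq_Nil_iff [simp]: "word f = [] \<longleftrightarrow> f = []"
  by (cases f) auto

(* Proper forests: every arc encloses at least one position (no empty hairpin). *)
fun proper_tree :: "tree \<Rightarrow> bool" and proper :: "tree list \<Rightarrow> bool" where
  "proper_tree Unpaired = True"
| "proper_tree (Arc f) \<longleftrightarrow> f \<noteq> [] \<and> proper f"
| "proper [] = True"
| "proper (t # f) \<longleftrightarrow> proper_tree t \<and> proper f"

(* The flag s records that the forest is the whole interior of an
   enclosing arc, so that a lone arc in it is stacked on the enclosing one; every arc must be
   stacked on its parent (flag) or enclose exactly one arc. *)
fun canon_tree :: "bool \<Rightarrow> tree \<Rightarrow> bool" and canon :: "bool \<Rightarrow> tree list \<Rightarrow> bool" where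
  "canon_tree s Unpaired = True"
| "canon_tree s (Arc f) \<longleftrightarrow> f \<noteq> [] \<and> (s \<or> (\<exists>g. f = [Arc g])) \<and> canon True f"
| "canon s [] = True"
| "canon s [t] = canon_tree s t"
| "canon s (t # u # f) \<longleftrightarrow> canon_tree False t \<and> canon False (u # f)"

lemma canon_Cons:
  "canon s (t # f) \<longleftrightarrow> (if f = [] then canon_tree s t else canon_tree False t \<and> canon False f)"
  by (cases f) auto

lemma canon_False: "canon False f \<longleftrightarrow> (\<forall>t\<in>set f. canon_tree False t)"
  by (induction f rule: induct_list012) auto

lemma canon_snoc: "f \<noteq> [] \<Longrightarrow> canon s (f @ [t]) \<longleftrightarrow> canon False f \<and> canon_tree False t"
  by (induction f rule: induct_list012) (auto simp: canon_False)

lemma canon_tree_False: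
  "canon_tree False t \<longleftrightarrow> t = Unpaired \<or> (\<exists>g. t = Arc [Arc g] \<and> g \<noteq> [] \<and> canon True g)"
  by (cases t) auto

lemma canon_proper: "canon_tree s t \<Longrightarrow> proper_tree t" "canon s f \<Longrightarrow> proper f"
  by (induction s t and s f rule: canon_tree_canon.induct) auto

lemma generated_canon:
  "generated A w \<Longrightarrow>
   (A = S \<longrightarrow> (\<exists>f. f \<noteq> [] \<and> canon False f \<and> w = word f)) \<and>
   (A = R \<longrightarrow> (\<exists>f. f \<noteq> [] \<and> canon True f \<and> w = Op # word f @ [Cl]))"
proof (induction rule: generated.induct)
  case S_dot
  show ?case by (auto intro!: exI[of _ "[Unpaired]"])
next
  case (S_app_dot u)
  then obtain f where "f \<noteq> []" "canon False f" "u = word f" by auto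
  then show ?case by (auto simp: canon_False intro!: exI[of _ "f @ [Unpaired]"])
next
  case (S_arc v)
  then obtain g where "g \<noteq> []" "canon True g" "v = Op # word g @ [Cl]" by auto
  then show ?case by (auto intro!: exI[of _ "[Arc [Arc g]]"])
next
  case (S_app_arc u v)
  then obtain f g where "f \<noteq> []" "canon False f" "u = word f"
    "g \<noteq> []" "canon True g" "v = Op # word g @ [Cl]" by auto
  then show ?case by (auto simp: canon_False intro!: exI[of _ "f @ [Arc [Arc g]]"])
next
  case R_dot
  show ?case by (auto intro!: exI[of _ "[Unpaired]"])
next
  case (R_stack v)
  then obtain g where "g \<noteq> []" "canon True g" "v = Op # word g @ [Cl]" by auto
  then show ?case by (auto intro!: exI[of _ "[Arc g]"])
next
  case (R_app_arc u v)
  then obtain f g where "f \<noteq> []" "canon False f" "u = word f"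
    "g \<noteq> []" "canon True g" "v = Op # word g @ [Cl]" by auto
  then show ?case by (auto simp: canon_snoc intro!: exI[of _ "f @ [Arc [Arc g]]"])
next
  case (R_app_dot u)
  then obtain f where "f \<noteq> []" "canon False f" "u = word f" by auto
  then show ?case by (auto simp: canon_snoc intro!: exI[of _ "f @ [Unpaired]"])
qed

(* Appending a leaf or a double arc to an S-word yields an S-word (resp. an R-word when
   wrapped in an arc); these are the productions read from the right. *)
lemma generated_S_snoc:
  assumes "canon_tree False t" "f = [] \<or> generated S (word f)"
    and "\<And>g. t = Arc [Arc g] \<Longrightarrow> generated R (Op # word g @ [Cl])"
  shows "generated S (word (f @ [t]))"
proof -
  from assms(1) consider "t = Unpaired" | g where "t = Arc [Arc g]"
    by (auto simp: canon_tree_False)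
  then show ?thesis
  proof cases
    case 1
    with assms(2) show ?thesis using S_dot S_app_dot by auto
  next
    case (2 g)
    have arc: "generated R (Op # word g @ [Cl])" using assms(3)[OF 2] .
    show ?thesis
    proof (cases "f = []")
      case True
      then show ?thesis using S_arc[OF arc] 2 by simp
    next
      case False
      then show ?thesis using S_app_arc[OF _ arc] assms(2) 2 by simp
    qed
  qed
qed

lemma generated_R_snoc:
  assumes "canon_tree False t" "generated S (word f)"
    and "\<And>g. t = Arc [Arc g] \<Longrightarrow> generated R (Op # word g @ [Cl])"
  shows "generated R (Op # word (f @ [t]) @ [Cl])"
proof -
  from assms(1) consider "t = Unpaired" | g where "t = Arc [Arc g]"
    by (auto simp: canon_tree_False)
  then show ?thesis
  proof cases
    case 1
    with assms(2) show ?thesis using R_app_dot by simp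
  next
    case (2 g)
    then show ?thesis using R_app_arc[OF assms(2) assms(3)[OF 2]] by simp
  qed
qed

lemma canon_generated:
  "f \<noteq> [] \<Longrightarrow> (canon False f \<longrightarrow> generated S (word f)) \<and>
                (canon True f \<longrightarrow> generated R (Op # word f @ [Cl]))"
proof (induction "length (word f)" arbitrary: f rule: less_induct)
  case less
  from \<open>f \<noteq> []\<close> obtain f' t where f: "f = f' @ [t]" by (metis rev_exhaust)
  have R_inner: "generated R (Op # word g @ [Cl])" if "canon_tree False t" "t = Arc [Arc g]" for g
    using less.hyps[of g] that f by simp
  have S_prefix: "generated S (word f')" if "f' \<noteq> []" "canon False f'"
    using less.hyps[of f'] that f by simp
  show ?case
  proof (intro conjI impI)
    assume "canon False f"
    have "canon_tree False t \<and> (f' = [] \<or> canon False f')"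
    proof (cases "f' = []")
      case False
      with \<open>canon False f\<close> f canon_snoc[OF False] show ?thesis by simp
    qed (use \<open>canon False f\<close> f in simp)
    then show "generated S (word f)"
      using generated_S_snoc R_inner S_prefix f by blast
  next
    assume "canon True f"
    show "generated R (Op # word f @ [Cl])"
    proof (cases "f' = []")
      case True
      with \<open>canon True f\<close> f consider "t = Unpaired" | g where "t = Arc g" "g \<noteq> []" "canon True g"
        by (cases t) auto
      then show ?thesis
      proof cases
        case 1
        with f True show ?thesis using R_dot by simp
      next
        case (2 g)
        with less.hyps[of g] f True show ?thesis using R_stack by fastforce
      qed
    next
      case False
      with \<open>canon True f\<close> f have "canon_tree False t" "canon False f'"
        using canon_snoc by auto
      then show ?thesis using generated_R_snoc S_prefix R_inner False f by blast
    qed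
  qed
qed

lemma generated_S_iff: "generated S w \<longleftrightarrow> (\<exists>f. f \<noteq> [] \<and> canon False f \<and> w = word f)"
  using generated_canon[of S w] canon_generated by blast

lemma generated_R_iff:
  "generated R w \<longleftrightarrow> (\<exists>f. f \<noteq> [] \<and> canon True f \<and> w = Op # word f @ [Cl])"
  using generated_canon[of R w] canon_generated by blast

section \<open>Compatible pairs, and from forests to secondary structures\<close>

definition compatible :: "nat \<times> nat \<Rightarrow> nat \<times> nat \<Rightarrow> bool" where
  "compatible p q \<longleftrightarrow> (case (p, q) of ((i, j), (k, l)) \<Rightarrow>
     j < k \<or> l < i \<or> (i < k \<and> l < j) \<or> (k < i \<and> j < l))"

lemma compatible_iff:
  assumes "i < j" "k < l"
  shows "compatible (i, j) (k, l) \<longleftrightarrow>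
    {i, j} \<inter> {k, l} = {} \<and> \<not> (i < k \<and> k < j \<and> j < l) \<and> \<not> (k < i \<and> i < l \<and> l < j)"
  using assms unfolding compatible_def by auto

lemma sec_struct_explicit:
  "sec_struct n P \<longleftrightarrow>
     (\<forall>i j. (i, j) \<in> P \<longrightarrow> 1 \<le> i \<and> i + 1 < j \<and> j \<le> n) \<and>
     (\<forall>i j k l. (i, j) \<in> P \<longrightarrow> (k, l) \<in> P \<longrightarrow> \<not> (i < k \<and> k < j \<and> j < l)) \<and>
     (\<forall>i j k l. (i, j) \<in> P \<longrightarrow> (k, l) \<in> P \<longrightarrow> (i, j) \<noteq> (k, l) \<longrightarrow> {i, j} \<inter> {k, l} = {})"
proof -
  have "(1 \<le> i \<and> i < j \<and> j \<le> n \<and> j - i > 1) \<longleftrightarrow> (1 \<le> i \<and> i + 1 < j \<and> j \<le> n)" for i j :: nat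
    by auto
  then show ?thesis
    unfolding sec_struct_def Ball_def split_paired_All case_prod_conv by (simp only:) blast
qed

lemma sec_struct_iff:
  "sec_struct n P \<longleftrightarrow> (\<forall>(i, j)\<in>P. 1 \<le> i \<and> i + 1 < j \<and> j \<le> n) \<and> pairwise compatible P"
proof
  assume "sec_struct n P"
  then have bounds: "\<And>i j. (i, j) \<in> P \<Longrightarrow> 1 \<le> i \<and> i + 1 < j \<and> j \<le> n"
    and cross: "\<And>i j k l. (i, j) \<in> P \<Longrightarrow> (k, l) \<in> P \<Longrightarrow> \<not> (i < k \<and> k < j \<and> j < l)"
    and disj: "\<And>i j k l. (i, j) \<in> P \<Longrightarrow> (k, l) \<in> P \<Longrightarrow> (i, j) \<noteq> (k, l) \<Longrightarrow> {i, j} \<inter> {k, l} = {}"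
    unfolding sec_struct_explicit by blast+
  have "compatible (i, j) (k, l)" if "(i, j) \<in> P" "(k, l) \<in> P" "(i, j) \<noteq> (k, l)" for i j k l
  proof -
    have "i < j" "k < l" using bounds that(1,2) by force+
    with cross[OF that(1,2)] cross[OF that(2,1)] disj[OF that] show ?thesis
      by (simp add: compatible_iff)
  qed
  with bounds show "(\<forall>(i, j)\<in>P. 1 \<le> i \<and> i + 1 < j \<and> j \<le> n) \<and> pairwise compatible P"
    unfolding pairwise_def by fast
next
  assume "(\<forall>(i, j)\<in>P. 1 \<le> i \<and> i + 1 < j \<and> j \<le> n) \<and> pairwise compatible P"
  then have bounds: "\<And>i j. (i, j) \<in> P \<Longrightarrow> 1 \<le> i \<and> i + 1 < j \<and> j \<le> n"
    and compat: "\<And>p q. p \<in> P \<Longrightarrow> q \<in> P \<Longrightarrow> p \<noteq> q \<Longrightarrow> compatible p q"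
    unfolding pairwise_def by blast+
  have sep: "{i, j} \<inter> {k, l} = {} \<and> \<not> (i < k \<and> k < j \<and> j < l)"
    if "(i, j) \<in> P" "(k, l) \<in> P" "(i, j) \<noteq> (k, l)" for i j k l
  proof -
    have "i < j" "k < l" using bounds that(1,2) by force+
    with compat[OF that] show ?thesis by (simp add: compatible_iff)
  qed
  have "\<not> (i < k \<and> k < j \<and> j < l)" if "(i, j) \<in> P" "(k, l) \<in> P" for i j k l
    using sep[OF that] by (cases "(i, j) = (k, l)") auto
  with bounds sep show "sec_struct n P"
    unfolding sec_struct_explicit by blast
qed

definition pos_char :: "(nat \<times> nat) set \<Rightarrow> nat \<Rightarrow> sym" where
  "pos_char P k = (if \<exists>j. (k, j) \<in> P then Op else if \<exists>i. (i, k) \<in> P then Cl else Dot)"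

lemma dotbracket_pos_char: "dotbracket n P = map (pos_char P) [1..<n + 1]"
  unfolding dotbracket_def pos_char_def ..

lemma pos_char_union:
  "\<forall>(i, j)\<in>Q. i \<noteq> k \<and> j \<noteq> k \<Longrightarrow> pos_char (P \<union> Q) k = pos_char P k"
  unfolding pos_char_def by fastforce

(* The pairs of a forest whose first position is a. *)
fun arcs_tree :: "nat \<Rightarrow> tree \<Rightarrow> (nat \<times> nat) set" and arcs :: "nat \<Rightarrow> tree list \<Rightarrow> (nat \<times> nat) set" where
  "arcs_tree a Unpaired = {}"
| "arcs_tree a (Arc f) = insert (a, a + length (word f) + 1) (arcs (a + 1) f)"
| "arcs a [] = {}"
| "arcs a (t # f) = arcs_tree a t \<union> arcs (a + length (word_tree t)) f"

lemma arcs_bounds: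
  "\<forall>(i, j)\<in>arcs_tree a t. a \<le> i \<and> i < j \<and> j < a + length (word_tree t)"
  "\<forall>(i, j)\<in>arcs a f. a \<le> i \<and> i < j \<and> j < a + length (word f)"
  by (induction a t and a f rule: arcs_tree_arcs.induct) fastforce+

lemma arcs_hairpin:
  "proper_tree t \<Longrightarrow> \<forall>(i, j)\<in>arcs_tree a t. i + 1 < j"
  "proper f \<Longrightarrow> \<forall>(i, j)\<in>arcs a f. i + 1 < j"
  by (induction a t and a f rule: arcs_tree_arcs.induct) auto

lemma arcs_compatible:
  "pairwise compatible (arcs_tree a t)" "pairwise compatible (arcs a f)"
proof (induction a t and a f rule: arcs_tree_arcs.induct)
  case (2 a f)
  have "compatible (a, a + length (word f) + 1) q \<and> compatible q (a, a + length (word f) + 1)"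
    if "q \<in> arcs (a + 1) f" for q
    using arcs_bounds(2)[of "a + 1" f] that by (auto simp: compatible_def split_beta)
  with 2 show ?case by (simp add: pairwise_insert)
next
  case (4 a t f)
  have "compatible p q \<and> compatible q p" if "p \<in> arcs_tree a t" "q \<in> arcs (a + length (word_tree t)) f" for p q
  proof -
    have "snd p < fst q"
      using arcs_bounds(1)[of a t] arcs_bounds(2)[of "a + length (word_tree t)" f] that by fastforce
    then show ?thesis by (auto simp: compatible_def split_beta)
  qed
  note across = this
  show ?case unfolding pairwise_def
  proof (intro ballI impI)
    fix p q assume "p \<in> arcs a (t # f)" "q \<in> arcs a (t # f)" "p \<noteq> q"
    then consider "p \<in> arcs_tree a t" "q \<in> arcs_tree a t"
      | "p \<in> arcs (a + length (word_tree t)) f" "q \<in> arcs (a + length (word_tree t)) f"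
      | "p \<in> arcs_tree a t" "q \<in> arcs (a + length (word_tree t)) f"
      | "q \<in> arcs_tree a t" "p \<in> arcs (a + length (word_tree t)) f"
      by auto
    then show "compatible p q"
      using 4 across \<open>p \<noteq> q\<close> unfolding pairwise_def by cases blast+
  qed
qed simp_all

lemma upt_wrap: "[a..<a + n + 2] = a # [a + 1..<a + n + 1] @ [a + n + 1]"
  by (simp add: upt_conv_Cons)

lemma arcs_word:
  "map (pos_char (arcs_tree a t)) [a..<a + length (word_tree t)] = word_tree t"
  "map (pos_char (arcs a f)) [a..<a + length (word f)] = word f"
proof (induction a t and a f rule: arcs_tree_arcs.induct)
  case (1 a)
  show ?case by (simp add: pos_char_def)
next
  case (2 a f)
  define e where "e = a + length (word f) + 1"
  define Q where "Q = arcs (a + 1) f"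
  have arcs_eq: "arcs_tree a (Arc f) = insert (a, e) Q"
    unfolding Q_def e_def by simp
  have IH: "map (pos_char Q) [a + 1..<e] = word f"
    using 2 unfolding Q_def e_def by simp
  have inner: "\<forall>(i, j)\<in>Q. a < i \<and> i < j \<and> j < e"
    using arcs_bounds(2)[of "a + 1" f] unfolding Q_def e_def by fastforce
  have "a + length (word_tree (Arc f)) = a + length (word f) + 2" by simp
  then have ups: "[a..<a + length (word_tree (Arc f))] = a # [a + 1..<e] @ [e]"
    unfolding e_def by (simp only: upt_wrap)
  have left: "pos_char (insert (a, e) Q) a = Op"
    by (auto simp: pos_char_def)
  have "\<not> (\<exists>j. (e, j) \<in> insert (a, e) Q)"
    using inner unfolding e_def by auto
  then have right: "pos_char (insert (a, e) Q) e = Cl"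
    by (auto simp: pos_char_def)
  have middle: "map (pos_char (insert (a, e) Q)) [a + 1..<e] = map (pos_char Q) [a + 1..<e]"
    using pos_char_union[of "{(a, e)}" _ Q] by (intro map_cong) auto
  show ?case
    unfolding arcs_eq ups by (simp only: list.map map_append left right middle IH word_tree.simps)
next
  case 3
  show ?case by simp
next
  case (4 a t f)
  define m where "m = a + length (word_tree t)"
  have "[a..<a + length (word (t # f))] = [a..<m] @ [m..<m + length (word f)]"
    using upt_add_eq_append[of a m "length (word f)"] unfolding m_def by (simp add: add.assoc)
  moreover have "map (pos_char (arcs a (t # f))) [a..<m] = map (pos_char (arcs_tree a t)) [a..<m]"
    using arcs_bounds(2)[of m f] by (intro map_cong) (auto simp: m_def intro!: pos_char_union)
  moreover have "map (pos_char (arcs a (t # f))) [m..<m + length (word f)]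
      = map (pos_char (arcs m f)) [m..<m + length (word f)]"
  proof (rule map_cong[OF refl])
    fix k assume "k \<in> set [m..<m + length (word f)]"
    then have "\<forall>(i, j)\<in>arcs_tree a t. i \<noteq> k \<and> j \<noteq> k"
      using arcs_bounds(1)[of a t] unfolding m_def by fastforce
    then show "pos_char (arcs a (t # f)) k = pos_char (arcs m f) k"
      using pos_char_union[of "arcs_tree a t" k "arcs m f"] by (simp add: Un_commute m_def)
  qed
  ultimately show ?case using 4 unfolding m_def by simp
qed

definition stacked :: "(nat \<times> nat) set \<Rightarrow> nat \<times> nat \<Rightarrow> bool" where
  "stacked P p \<longleftrightarrow> (case p of (i, j) \<Rightarrow> (i - 1, j + 1) \<in> P \<or> (i + 1, j - 1) \<in> P)"

lemma canonical_iff_stacked: "canonical P \<longleftrightarrow> (\<forall>p\<in>P. stacked P p)"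
  unfolding canonical_def stacked_def by auto

lemma stacked_mono: "stacked P p \<Longrightarrow> P \<subseteq> Q \<Longrightarrow> stacked Q p"
  unfolding stacked_def by auto

(* Canonical forests give canonical structures, except possibly for the outermost arc of
   a lone tree when that tree is allowed to stack on an enclosing arc (flag s). *)
lemma arcs_stacked:
  "canon_tree s t \<Longrightarrow>
     \<forall>p\<in>arcs_tree a t. stacked (arcs_tree a t) p \<or> (s \<and> p = (a, a + length (word_tree t) - 1))"
  "canon s f \<Longrightarrow>
     \<forall>p\<in>arcs a f. stacked (arcs a f) p \<or> (s \<and> p = (a, a + length (word f) - 1))"
proof (induction t and f arbitrary: s a and s a rule: word_tree_word.induct)
  case (2 f)
  define e where "e = a + length (word f) + 1"
  define Q where "Q = arcs (a + 1) f"
  have arcs_eq: "arcs_tree a (Arc f) = insert (a, e) Q"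
    unfolding Q_def e_def by simp
  from "2.prems" have f: "f \<noteq> []" "s \<or> (\<exists>g. f = [Arc g])" "canon True f" by auto
  have inner: "\<forall>p\<in>Q. stacked Q p \<or> p = (a + 1, e - 1)"
    using "2.IH"[OF f(3), of "a + 1"] unfolding Q_def e_def by auto
  have "stacked (insert (a, e) Q) p" if "p \<in> Q" for p
    using inner that stacked_mono[of Q p] by (auto simp: stacked_def e_def)
  moreover have "stacked (insert (a, e) Q) (a, e)" if "\<not> s"
  proof -
    from f(2) that obtain g where "f = [Arc g]" by blast
    then have "(a + 1, e - 1) \<in> Q" unfolding Q_def e_def by simp
    then show ?thesis by (simp add: stacked_def)
  qed
  ultimately show ?case
    unfolding arcs_eq by (auto simp: e_def)
next
  case (4 t f)
  show ?case
  proof (cases "f = []")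
    case True
    with "4.prems" "4.IH"(1)[of s a] show ?thesis by simp
  next
    case False
    with "4.prems" have "canon_tree False t" "canon False f" by (simp_all add: canon_Cons)
    with "4.IH"(1)[of False a] "4.IH"(2)[of False "a + length (word_tree t)"]
    show ?thesis using stacked_mono by fastforce
  qed
qed simp_all

lemma forest_sec_struct:
  assumes "proper f"
  shows "sec_struct (length (word f)) (arcs 1 f)"
    and "dotbracket (length (word f)) (arcs 1 f) = word f"
proof -
  have "\<forall>(i, j)\<in>arcs 1 f. 1 \<le> i \<and> i + 1 < j \<and> j \<le> length (word f)"
    using arcs_bounds(2)[of 1 f] arcs_hairpin(2)[OF assms, of 1] by fastforce
  with arcs_compatible(2) show "sec_struct (length (word f)) (arcs 1 f)"
    unfolding sec_struct_iff by blast
  show "dotbracket (length (word f)) (arcs 1 f) = word f"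
    using arcs_word(2)[of 1 f] by (simp add: dotbracket_pos_char add.commute)
qed

lemma forest_canonical: "canon False f \<Longrightarrow> canonical (arcs 1 f)"
  using arcs_stacked(2)[of False f 1] by (simp add: canonical_iff_stacked)

section \<open>From secondary structures to forests\<close>

definition isolated :: "(nat \<times> nat) set \<Rightarrow> nat \<Rightarrow> nat \<Rightarrow> bool" where
  "isolated P a b \<longleftrightarrow> (\<forall>(i, j)\<in>P. (a \<le> i \<and> i < b) \<longleftrightarrow> (a \<le> j \<and> j < b))"

lemma upt_split3: "a < c \<Longrightarrow> c < b \<Longrightarrow> [a..<b] = a # [a + 1..<c] @ c # [c + 1..<b]"
proof -
  assume "a < c" "c < b"
  then have "[a..<b] = [a..<c] @ [c..<b]" using upt_add_eq_append[of a c "b - c"] by simp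
  also have "[a..<c] = a # [a + 1..<c]" using \<open>a < c\<close> by (simp add: upt_conv_Cons)
  also have "[c..<b] = c # [c + 1..<b]" using \<open>c < b\<close> by (simp add: upt_conv_Cons)
  finally show ?thesis by simp
qed

lemma compatible_endpoints:
  "compatible (i, j) (k, l) \<Longrightarrow> i < j \<Longrightarrow> k < l \<Longrightarrow> i \<noteq> k \<and> i \<noteq> l \<and> j \<noteq> k \<and> j \<noteq> l"
  by (auto simp: compatible_iff)

(* The forest f represents the segment [a,b) of P: same word, a lone arc if a pairs with
   b-1, and canonical (with the flag telling whether the segment is the interior of a pair)
   whenever P is canonical. *)
definition represents :: "(nat \<times> nat) set \<Rightarrow> nat \<Rightarrow> nat \<Rightarrow> tree list \<Rightarrow> bool" where
  "represents P a b f \<longleftrightarrow> proper f \<and> word f = map (pos_char P) [a..<b]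
     \<and> ((a, b - 1) \<in> P \<longrightarrow> (\<exists>g. f = [Arc g]))
     \<and> (canonical P \<longrightarrow> canon ((a - 1, b) \<in> P) f)"

context
  fixes P :: "(nat \<times> nat) set"
  assumes hairpin: "\<forall>(i, j)\<in>P. i + 1 < j"
    and compat: "pairwise compatible P"
begin

lemma pair_compatible: "(i, j) \<in> P \<Longrightarrow> (k, l) \<in> P \<Longrightarrow> (i, j) \<noteq> (k, l) \<Longrightarrow> compatible (i, j) (k, l)"
  using compat unfolding pairwise_def by blast

lemma pair_endpoints:
  assumes "(i, j) \<in> P" "(k, l) \<in> P" "(i, j) \<noteq> (k, l)"
  shows "i \<noteq> k \<and> i \<noteq> l \<and> j \<noteq> k \<and> j \<noteq> l"
proof -
  have "i < j" "k < l" using hairpin assms(1,2) by auto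
  then show ?thesis using compatible_endpoints[OF pair_compatible[OF assms]] by blast
qed

lemma isolated_skip:
  assumes "isolated P a b" "\<forall>j. (a, j) \<notin> P"
  shows "isolated P (a + 1) b"
  unfolding isolated_def
proof (intro ballI, clarify)
  fix i j assume ij: "(i, j) \<in> P"
  with assms(2) have "i \<noteq> a" by blast
  moreover have "a \<le> i \<and> i < b \<longleftrightarrow> a \<le> j \<and> j < b"
    using assms(1) ij unfolding isolated_def by blast
  moreover have "i < j" using hairpin ij by auto
  ultimately show "(a + 1 \<le> i \<and> i < b) \<longleftrightarrow> (a + 1 \<le> j \<and> j < b)" by auto
qed

lemma isolated_inside:
  assumes "(a, c) \<in> P"
  shows "isolated P (a + 1) c"
  unfolding isolated_def
proof (intro ballI, clarify)
  fix i j assume ij: "(i, j) \<in> P"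
  have "i < j" using hairpin ij by auto
  show "(a + 1 \<le> i \<and> i < c) \<longleftrightarrow> (a + 1 \<le> j \<and> j < c)"
  proof (cases "(i, j) = (a, c)")
    case False
    then have "c < i \<or> j < a \<or> (a < i \<and> j < c) \<or> (i < a \<and> c < j)"
      using pair_compatible[OF assms ij] False by (auto simp: compatible_def)
    then show ?thesis using \<open>i < j\<close> by (elim disjE) auto
  qed auto
qed

lemma isolated_after:
  assumes "isolated P a b" "(a, c) \<in> P"
  shows "isolated P (c + 1) b"
  unfolding isolated_def
proof (intro ballI, clarify)
  fix i j assume ij: "(i, j) \<in> P"
  have "i < j" using hairpin ij by auto
  have "a < c" using hairpin assms(2) by auto
  have iso: "a \<le> i \<and> i < b \<longleftrightarrow> a \<le> j \<and> j < b"
    using assms(1) ij unfolding isolated_def by blast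
  show "(c + 1 \<le> i \<and> i < b) \<longleftrightarrow> (c + 1 \<le> j \<and> j < b)"
  proof (cases "(i, j) = (a, c)")
    case False
    then have "c < i \<or> j < a \<or> (a < i \<and> j < c) \<or> (i < a \<and> c < j)"
      using pair_compatible[OF assms(2) ij] False by (auto simp: compatible_def)
    then show ?thesis using \<open>i < j\<close> \<open>a < c\<close> iso by (elim disjE) auto
  qed (use \<open>a < c\<close> in auto)
qed

lemma arc_chars:
  assumes "(a, c) \<in> P"
  shows "pos_char P a = Op" "pos_char P c = Cl"
proof -
  show "pos_char P a = Op" using assms by (auto simp: pos_char_def)
  have "(c, m) \<notin> P" for m
    using pair_endpoints[OF assms, of c m] hairpin assms by auto
  then show "pos_char P c = Cl" using assms by (auto simp: pos_char_def)
qed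

lemma represents_empty: "b \<le> a \<Longrightarrow> represents P a b []"
  using hairpin by (auto simp: represents_def)

lemma represents_unpaired:
  assumes "a < b" "isolated P a b" "\<forall>c. (a, c) \<notin> P" and f: "represents P (a + 1) b f"
  shows "represents P a b (Unpaired # f)"
proof -
  have "(i, a) \<notin> P" for i
    using assms(1,2) hairpin unfolding isolated_def by fastforce
  with assms(3) have "pos_char P a = Dot" by (simp add: pos_char_def)
  moreover have "[a..<b] = a # [a + 1..<b]" using assms(1) by (simp add: upt_conv_Cons)
  ultimately show ?thesis
    using f assms(3) unfolding represents_def by (auto simp: canon_Cons)
qed

(* Representing a segment starting with a pair (a,c) by an arc over the interior followed
   by the rest; canonicity of the arc follows from (a,c) being stacked, because a pair
   (a-1,c+1) can only exist if the segment ends at c. *)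
lemma represents_arc:
  assumes "1 \<le> a" "isolated P a b" "(a, c) \<in> P" "a < b"
    and f1: "represents P (a + 1) c f1" and f2: "represents P (c + 1) b f2"
  shows "represents P a b (Arc f1 # f2)"
proof -
  have "a + 1 < c" using hairpin assms(3) by auto
  have "c < b" using assms(2-4) unfolding isolated_def by fastforce
  have "f1 \<noteq> []" using f1 \<open>a + 1 < c\<close> by (auto simp: represents_def)
  have f2_Nil: "f2 = [] \<longleftrightarrow> b = c + 1" using f2 \<open>c < b\<close> by (auto simp: represents_def)
  have "(c, b) \<notin> P" using pair_endpoints[OF assms(3), of c b] hairpin assms(3) by auto
  have word: "word (Arc f1 # f2) = map (pos_char P) [a..<b]"
    using f1 f2 arc_chars[OF assms(3)] upt_split3[OF _ \<open>c < b\<close>, of a] \<open>a + 1 < c\<close>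
    by (simp add: represents_def)
  have single: "\<exists>g. Arc f1 # f2 = [Arc g]" if "(a, b - 1) \<in> P"
  proof -
    have "b - 1 = c" using pair_endpoints[OF assms(3) that] by auto
    with f2_Nil \<open>c < b\<close> show ?thesis by auto
  qed
  have canon: "canon ((a - 1, b) \<in> P) (Arc f1 # f2)" if "canonical P"
  proof -
    from that assms(3) have "(a - 1, c + 1) \<in> P \<or> (a + 1, c - 1) \<in> P"
      by (auto simp: canonical_iff_stacked stacked_def)
    moreover have "b = c + 1" if "(a - 1, c + 1) \<in> P"
    proof -
      have "(a \<le> a - 1 \<and> a - 1 < b) \<longleftrightarrow> (a \<le> c + 1 \<and> c + 1 < b)"
        using assms(2) that unfolding isolated_def by blast
      with assms(1) \<open>a + 1 < c\<close> \<open>c < b\<close> show ?thesis by linarith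
    qed
    ultimately have "(if f2 = [] then (a - 1, b) \<in> P else False) \<or> (\<exists>g. f1 = [Arc g])"
      using f1 f2_Nil by (auto simp: represents_def)
    then show ?thesis
      using \<open>f1 \<noteq> []\<close> f1 f2 \<open>(c, b) \<notin> P\<close> assms(3) that
      by (auto simp: represents_def canon_Cons)
  qed
  show ?thesis
    using f1 f2 \<open>f1 \<noteq> []\<close> word single canon by (auto simp: represents_def)
qed

lemma structure_forest: "1 \<le> a \<Longrightarrow> isolated P a b \<Longrightarrow> \<exists>f. represents P a b f"
proof (induction "b - a" arbitrary: a b rule: less_induct)
  case less
  show ?case
  proof (cases "a < b")
    case False
    then show ?thesis by (intro exI[of _ "[]"] represents_empty) simp
  next
    case True
    show ?thesis
    proof (cases "\<exists>c. (a, c) \<in> P")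
      case False
      with less.prems have "isolated P (a + 1) b" using isolated_skip by blast
      moreover have "b - (a + 1) < b - a" using True by simp
      ultimately obtain f where "represents P (a + 1) b f" using less.hyps by fastforce
      with True False less.prems show ?thesis using represents_unpaired by blast
    next
      case True
      then obtain c where ac: "(a, c) \<in> P" by blast
      have "a + 1 < c" using hairpin ac by auto
      have "c < b" using less.prems(2) ac \<open>a < b\<close> unfolding isolated_def by fastforce
      have "c - (a + 1) < b - a" "b - (c + 1) < b - a" using \<open>a + 1 < c\<close> \<open>c < b\<close> by auto
      then obtain f1 f2 where "represents P (a + 1) c f1" "represents P (c + 1) b f2"
        using less.hyps isolated_inside[OF ac] isolated_after[OF less.prems(2) ac] by fastforce
      with less.prems ac \<open>a < b\<close> show ?thesis using represents_arc by blast
    qed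
  qed
qed

end

lemma balanced_word: "balanced (word_tree t)" "balanced (word f)"
  by (induction t and f rule: word_tree_word.induct)
    (simp_all add: balanced_Dot balanced_arc balanced_append balanced_Nil)

lemma single_arc:
  assumes "balanced w" "word f = Op # w @ [Cl]"
  shows "\<exists>g. f = [Arc g] \<and> word g = w"
proof -
  obtain t f' where "f = t # f'" using assms(2) by (cases f) auto
  moreover from this assms(2) obtain g where "t = Arc g" by (cases t) auto
  ultimately have f: "f = Arc g # f'" by simp
  with assms(2) have eq: "word g @ Cl # word f' = w @ [Cl]" by simp
  have "f' = []"
  proof (rule ccontr)
    assume "f' \<noteq> []"
    then obtain z c where "word f' = z @ [c]" by (metis rev_exhaust word_eq_Nil_iff)
    with eq have "w = (word g @ [Cl]) @ z" by simp
    with assms(1) have "0 \<le> height (word g @ [Cl])" unfolding balanced_def by blast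
    moreover have "height (word g) = 0" using balanced_word(2) unfolding balanced_def by blast
    ultimately show False by simp
  qed
  with f eq show ?thesis by simp
qed

lemma is_ss_iff: "is_ss w \<longleftrightarrow> (\<exists>f. proper f \<and> word f = w)"
proof
  assume "is_ss w"
  then obtain P where P: "sec_struct (length w) P" "dotbracket (length w) P = w"
    unfolding is_ss_def by blast
  then have bounds: "\<forall>(i, j)\<in>P. 1 \<le> i \<and> i + 1 < j \<and> j \<le> length w"
    and compat: "pairwise compatible P" by (auto simp: sec_struct_iff)
  then have "\<forall>(i, j)\<in>P. i + 1 < j" "isolated P 1 (length w + 1)"
    by (auto simp: isolated_def)
  from structure_forest[OF this(1) compat _ this(2)] obtain f where
    "represents P 1 (length w + 1) f" by blast
  then have "proper f" "word f = map (pos_char P) [1..<length w + 1]"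
    unfolding represents_def by blast+
  with P(2) show "\<exists>f. proper f \<and> word f = w" by (auto simp: dotbracket_pos_char)
next
  assume "\<exists>f. proper f \<and> word f = w"
  then show "is_ss w" unfolding is_ss_def using forest_sec_struct by blast
qed

lemma is_canonical_ss_iff: "is_canonical_ss w \<longleftrightarrow> (\<exists>f. canon False f \<and> word f = w)"
proof
  assume "is_canonical_ss w"
  then obtain P where P: "sec_struct (length w) P" "dotbracket (length w) P = w" "canonical P"
    unfolding is_canonical_ss_def by blast
  then have bounds: "\<forall>(i, j)\<in>P. 1 \<le> i \<and> i + 1 < j \<and> j \<le> length w"
    and compat: "pairwise compatible P" by (auto simp: sec_struct_iff)
  then have "\<forall>(i, j)\<in>P. i + 1 < j" "isolated P 1 (length w + 1)" "(0, length w + 1) \<notin> P"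
    by (auto simp: isolated_def)
  from structure_forest[OF this(1) compat _ this(2)] obtain f where
    "represents P 1 (length w + 1) f" by blast
  with \<open>(0, length w + 1) \<notin> P\<close> P(3) have "canon False f" "word f = map (pos_char P) [1..<length w + 1]"
    unfolding represents_def by auto
  with P(2) show "\<exists>f. canon False f \<and> word f = w" by (auto simp: dotbracket_pos_char)
next
  assume "\<exists>f. canon False f \<and> word f = w"
  then obtain f where "canon False f" "word f = w" by blast
  then show "is_canonical_ss w" unfolding is_canonical_ss_def
    using forest_sec_struct[OF canon_proper(2)] forest_canonical by blast
qed

lemma lang_S: "lang S = {w. w \<noteq> [] \<and> is_canonical_ss w}"
  unfolding lang_generated generated_S_iff is_canonical_ss_iff by auto

lemma lang_R: "lang R = {w. w \<noteq> [] \<and> is_ss w \<and> is_canonical_ss (Op # w @ [Cl])}"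
proof -
  have "generated R w \<longleftrightarrow> w \<noteq> [] \<and> is_ss w \<and> is_canonical_ss (Op # w @ [Cl])" for w
  proof
    assume "generated R w"
    then obtain g where g: "g \<noteq> []" "canon True g" "w = Op # word g @ [Cl]"
      unfolding generated_R_iff by blast
    have "proper [Arc g]" using canon_proper(2)[OF g(2)] g(1) by simp
    then have "is_ss w" unfolding is_ss_iff using g(3) by (intro exI[of _ "[Arc g]"]) simp
    moreover have "is_canonical_ss (Op # w @ [Cl])"
      unfolding is_canonical_ss_iff using g by (intro exI[of _ "[Arc [Arc g]]"]) simp
    ultimately show "w \<noteq> [] \<and> is_ss w \<and> is_canonical_ss (Op # w @ [Cl])" using g(3) by simp
  next
    assume w: "w \<noteq> [] \<and> is_ss w \<and> is_canonical_ss (Op # w @ [Cl])"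
    then obtain f0 where "word f0 = w" using is_ss_iff by blast
    then have "balanced w" using balanced_word(2) by blast
    moreover obtain f where f: "canon False f" "word f = Op # w @ [Cl]"
      using w is_canonical_ss_iff by blast
    ultimately obtain h where h: "f = [Arc h]" "word h = w" using single_arc by blast
    with f(1) obtain g where "h = [Arc g]" "canon True h" by auto
    with h w show "generated R w" unfolding generated_R_iff by (intro exI[of _ g]) auto
  qed
  then show ?thesis unfolding lang_generated by blast
qed

theorem mainTheorem3:
  shows "non_ambiguous S
       \<and> lang S = {w. w \<noteq> [] \<and> is_canonical_ss w}
       \<and> lang R = {w. w \<noteq> [] \<and> is_ss w \<and> is_canonical_ss (Op # w @ [Cl])}"
  using lm_deriv_unique lang_S lang_R unfolding non_ambiguous_def by blast

end
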